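(* Let $G$ be an undirected graph with vertex set $V$ and integer edge weights. Choose $V_1\subseteq V$ uniformly at random (each vertex independently with probability $1/2$) and let $\overline V=V\setminus V_1$. Let $G'$ have vertex set $V\cup V_2$, where $V_2=\{u_2:u\in V_1\}$ consists of new copies, and edges: all edges of $G$; for every edge $\{u,v\}$ of $G$ with $u,v\in V_1$ an edge $\{u_2,v_2\}$ of the same weight; and for every edge $\{u,v\}$ of $G$ with $u\in V_1,v\in\overline V$ an edge $\{u_2,v\}$ of the same weight. Let $N(G')$ denote the number of vertices of $G'$ lying on a negative-weight triangle. If $G$ has no negative-weight triangle then $N(G')$ is even with probability $1$; if $G$ has a negative-weight triangle then $N(G')$ is odd with probability exactly $1/2$.
   Context: A negative-weight triangle is a set of three pairwise adjacent vertices whose three edge weights sum to a negative number. *)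

theory Defs
  imports "HOL-Probability.Probability"
begin

text \<open>A weighted undirected graph is given by a vertex set V, a symmetric
irreflexive adjacency relation E (edges only between vertices of V) and a
symmetric integer weight function w (only its values on edges matter).\<close>

definition neg_triangle ::
  "'v set \<Rightarrow> ('v \<Rightarrow> 'v \<Rightarrow> bool) \<Rightarrow> ('v \<Rightarrow> 'v \<Rightarrow> int) \<Rightarrow> 'v \<Rightarrow> 'v \<Rightarrow> 'v \<Rightarrow> bool" where
  "neg_triangle V E w a b c \<longleftrightarrow>
     a \<in> V \<and> b \<in> V \<and> c \<in> V \<and> a \<noteq> b \<and> b \<noteq> c \<and> a \<noteq> c \<and>
     E a b \<and> E b c \<and> E a c \<and> w a b + w b c + w a c < 0"

definition has_neg_triangle ::
  "'v set \<Rightarrow> ('v \<Rightarrow> 'v \<Rightarrow> bool) \<Rightarrow> ('v \<Rightarrow> 'v \<Rightarrow> int) \<Rightarrow> bool" where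
  "has_neg_triangle V E w \<longleftrightarrow> (\<exists>a b c. neg_triangle V E w a b c)"

definition num_neg_tri_vertices ::
  "'v set \<Rightarrow> ('v \<Rightarrow> 'v \<Rightarrow> bool) \<Rightarrow> ('v \<Rightarrow> 'v \<Rightarrow> int) \<Rightarrow> nat" where
  "num_neg_tri_vertices V E w = card {a \<in> V. \<exists>b c. neg_triangle V E w a b c}"

text \<open>The graph G' built from G and V1: vertices of V are \<open>Inl v\<close>, new copies
copies of u \<in> V1 are \<open>Inr u\<close>.\<close>

definition proj :: "'a + 'a \<Rightarrow> 'a" where
  "proj x = (case x of Inl v \<Rightarrow> v | Inr v \<Rightarrow> v)"

definition G'_verts :: "'a set \<Rightarrow> 'a set \<Rightarrow> ('a + 'a) set" where
  "G'_verts V V1 = Inl ` V \<union> Inr ` V1"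

fun G'_edge :: "'a set \<Rightarrow> 'a set \<Rightarrow> ('a \<Rightarrow> 'a \<Rightarrow> bool) \<Rightarrow> 'a + 'a \<Rightarrow> 'a + 'a \<Rightarrow> bool" where
  "G'_edge V V1 E (Inl u) (Inl v) = E u v"
| "G'_edge V V1 E (Inr u) (Inr v) = (u \<in> V1 \<and> v \<in> V1 \<and> E u v)"
| "G'_edge V V1 E (Inr u) (Inl v) = (u \<in> V1 \<and> v \<in> V - V1 \<and> E u v)"
| "G'_edge V V1 E (Inl v) (Inr u) = (u \<in> V1 \<and> v \<in> V - V1 \<and> E u v)"

definition G'_weight :: "('a \<Rightarrow> 'a \<Rightarrow> int) \<Rightarrow> 'a + 'a \<Rightarrow> 'a + 'a \<Rightarrow> int" where
  "G'_weight w x y = w (proj x) (proj y)"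

definition N_G' :: "'a set \<Rightarrow> ('a \<Rightarrow> 'a \<Rightarrow> bool) \<Rightarrow> ('a \<Rightarrow> 'a \<Rightarrow> int) \<Rightarrow> 'a set \<Rightarrow> nat" where
  "N_G' V E w V1 = num_neg_tri_vertices (G'_verts V V1) (G'_edge V V1 E) (G'_weight w)"

end

theory Submission
  imports Defs
begin

text \<open>A vertex of \<open>G'\<close> lies on a negative triangle iff its projection to \<open>G\<close> does: every
triangle of \<open>G'\<close> projects to a triangle of \<open>G\<close> of the same weight, and every negative
triangle \<open>abc\<close> of \<open>G\<close> lifts both to \<open>Inl a, Inl b, Inl c\<close> and, when \<open>a \<in> V\<^sub>1\<close>, to a triangle
through the copy \<open>Inr a\<close>. Hence, with \<open>U\<close> the set of vertices of \<open>G\<close> on negative triangles,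
\<open>N(G') = |U| + |U \<inter> V\<^sub>1| = 2 |U \<inter> V\<^sub>1| + |U - V\<^sub>1|\<close>, whose parity is that of \<open>|U - V\<^sub>1|\<close>.
If \<open>U = {}\<close> this is always even; otherwise toggling a fixed \<open>u \<in> U\<close> in \<open>V\<^sub>1\<close> is an
involution on the subsets of \<open>V\<close> exchanging the two parities.\<close>

lemma proj_simps [simp]: "proj (Inl a) = a" "proj (Inr a) = a"
  by (simp_all add: proj_def)

lemma G'_edge_proj:
  assumes "G'_edge V V1 E x y" and "\<And>u v. E u v \<Longrightarrow> E v u"
  shows "E (proj x) (proj y)"
  using assms by (cases x; cases y) auto

lemma neg_triangle_G'_proj:
  assumes inV: "\<And>u v. E u v \<Longrightarrow> u \<in> V \<and> v \<in> V"
    and sym: "\<And>u v. E u v \<Longrightarrow> E v u" and irrefl: "\<And>u. \<not> E u u"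
    and "neg_triangle (G'_verts V V1) (G'_edge V V1 E) (G'_weight w) x y z"
  shows "neg_triangle V E w (proj x) (proj y) (proj z)"
proof -
  have edges: "E (proj x) (proj y)" "E (proj y) (proj z)" "E (proj x) (proj z)"
    using assms(4) G'_edge_proj[of V V1 E, OF _ sym] unfolding neg_triangle_def by blast+
  then have "proj x \<noteq> proj y" "proj y \<noteq> proj z" "proj x \<noteq> proj z"
    using irrefl by metis+
  with edges inV assms(4) show ?thesis
    unfolding neg_triangle_def G'_weight_def by blast
qed

lemma neg_triangle_G'_Inl:
  assumes "neg_triangle V E w a b c"
  shows "neg_triangle (G'_verts V V1) (G'_edge V V1 E) (G'_weight w) (Inl a) (Inl b) (Inl c)"
  using assms unfolding neg_triangle_def G'_verts_def G'_weight_def by auto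

text \<open>The other two corners stay in \<open>V\<^sub>1\<close> as copies and outside \<open>V\<^sub>1\<close> as originals, which is
exactly how the edges at \<open>Inr a\<close> were created.\<close>

lemma neg_triangle_G'_Inr:
  assumes "neg_triangle V E w a b c" and "a \<in> V1" and "V1 \<subseteq> V"
    and "\<And>u v. E u v \<Longrightarrow> E v u"
  defines "lift \<equiv> \<lambda>v. if v \<in> V1 then Inr v else Inl v"
  shows "neg_triangle (G'_verts V V1) (G'_edge V V1 E) (G'_weight w) (Inr a) (lift b) (lift c)"
proof -
  have "lift v \<in> G'_verts V V1" "proj (lift v) = v" if "v \<in> V" for v
    using that unfolding lift_def G'_verts_def by auto
  moreover have "G'_edge V V1 E (Inr a) (lift v)" if "v \<in> V" "E a v" for v
    using that assms(2) unfolding lift_def by auto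
  moreover have "G'_edge V V1 E (lift u) (lift v)" if "E u v" "u \<in> V" "v \<in> V" for u v
    using that assms(4) unfolding lift_def by auto
  moreover have "lift u \<noteq> lift v" if "u \<noteq> v" for u v
    using that unfolding lift_def by auto
  moreover have "Inr a \<noteq> lift v" if "a \<noteq> v" for v
    using that unfolding lift_def by auto
  ultimately show ?thesis
    using assms(1-3) unfolding neg_triangle_def G'_verts_def G'_weight_def by auto
qed

lemma G'_neg_triangle_vertices:
  fixes w :: "'a \<Rightarrow> 'a \<Rightarrow> int"
  assumes "\<And>u v. E u v \<Longrightarrow> u \<in> V \<and> v \<in> V"
    and sym: "\<And>u v. E u v \<Longrightarrow> E v u" and "\<And>u. \<not> E u u" and "V1 \<subseteq> V"
  defines "U \<equiv> {a \<in> V. \<exists>b c. neg_triangle V E w a b c}"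
  shows "{x \<in> G'_verts V V1. \<exists>y z. neg_triangle (G'_verts V V1) (G'_edge V V1 E) (G'_weight w) x y z}
         = Inl ` U \<union> Inr ` (U \<inter> V1)" (is "?S = _")
proof (intro equalityI subsetI)
  fix x assume "x \<in> ?S"
  then obtain y z where x: "x \<in> G'_verts V V1"
    and "neg_triangle (G'_verts V V1) (G'_edge V V1 E) (G'_weight w) x y z" by blast
  from this(2) have "neg_triangle V E w (proj x) (proj y) (proj z)"
    using neg_triangle_G'_proj[of E V V1 w x y z] assms(1-3) by blast
  then have "proj x \<in> U" unfolding U_def neg_triangle_def by blast
  with x show "x \<in> Inl ` U \<union> Inr ` (U \<inter> V1)" unfolding G'_verts_def by auto
next
  have corner: "x \<in> ?S" if "neg_triangle (G'_verts V V1) (G'_edge V V1 E) (G'_weight w) x y z"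
    for x y z
    using that unfolding neg_triangle_def by blast
  fix x assume "x \<in> Inl ` U \<union> Inr ` (U \<inter> V1)"
  then show "x \<in> ?S"
  proof
    assume "x \<in> Inl ` U"
    then obtain a b c where x: "x = Inl a" and "neg_triangle V E w a b c" unfolding U_def by auto
    from this(2)
    have "neg_triangle (G'_verts V V1) (G'_edge V V1 E) (G'_weight w) (Inl a) (Inl b) (Inl c)"
      by (rule neg_triangle_G'_Inl)
    then show ?thesis unfolding x by (rule corner)
  next
    assume "x \<in> Inr ` (U \<inter> V1)"
    then obtain a b c where x: "x = Inr a" and "a \<in> V1" "neg_triangle V E w a b c"
      unfolding U_def by auto
    then have "neg_triangle (G'_verts V V1) (G'_edge V V1 E) (G'_weight w) (Inr a)
        (if b \<in> V1 then Inr b else Inl b) (if c \<in> V1 then Inr c else Inl c)"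
      using neg_triangle_G'_Inr[of V E w a b c V1] \<open>V1 \<subseteq> V\<close> sym by blast
    then show ?thesis unfolding x by (rule corner)
  qed
qed

lemma N_G'_eq:
  fixes w :: "'a \<Rightarrow> 'a \<Rightarrow> int"
  assumes "finite V" and "\<And>u v. E u v \<Longrightarrow> u \<in> V \<and> v \<in> V"
    and "\<And>u v. E u v \<Longrightarrow> E v u" and "\<And>u. \<not> E u u" and "V1 \<subseteq> V"
  defines "U \<equiv> {a \<in> V. \<exists>b c. neg_triangle V E w a b c}"
  shows "N_G' V E w V1 = 2 * card (U \<inter> V1) + card (U - V1)"
proof -
  have "finite U" using assms(1) unfolding U_def by simp
  have "N_G' V E w V1 = card (Inl ` U \<union> Inr ` (U \<inter> V1))"
    unfolding N_G'_def num_neg_tri_vertices_def U_def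
    using G'_neg_triangle_vertices[of E V V1 w, OF assms(2-5)] by simp
  also have "\<dots> = card U + card (U \<inter> V1)"
    using \<open>finite U\<close> by (subst card_Un_disjoint) (auto simp: card_image)
  also have "card U = card (U \<inter> V1) + card (U - V1)"
    using \<open>finite U\<close> by (rule card_Int_Diff)
  finally show ?thesis by simp
qed

lemma card_subsets_odd_card_Diff:
  assumes "finite V" and "U \<subseteq> V" and "u \<in> U"
  shows "2 * card {X \<in> Pow V. odd (card (U - X))} = card (Pow V)"
proof -
  define toggle where "toggle X = (if u \<in> X then X - {u} else insert u X)" for X
  have "finite U" using assms(1,2) finite_subset by blast
  have toggle_toggle: "toggle (toggle X) = X" for X unfolding toggle_def by auto
  have toggle_Pow: "toggle X \<in> Pow V" if "X \<in> Pow V" for X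
    using that assms(2,3) unfolding toggle_def by auto
  have odd_toggle: "odd (card (U - toggle X)) \<longleftrightarrow> even (card (U - X))" for X
  proof (cases "u \<in> X")
    case True
    then have "U - toggle X = insert u (U - X)" using assms(3) unfolding toggle_def by auto
    with True \<open>finite U\<close> show ?thesis by simp
  next
    case False
    then have "U - X = insert u (U - toggle X)" "u \<notin> U - toggle X"
      using assms(3) unfolding toggle_def by auto
    with \<open>finite U\<close> show ?thesis by simp
  qed
  define Odd where "Odd = {X \<in> Pow V. odd (card (U - X))}"
  define Even where "Even = {X \<in> Pow V. even (card (U - X))}"
  have "bij_betw toggle Odd Even"
  proof (rule bij_betwI[where g = toggle])
    show "toggle \<in> Odd \<rightarrow> Even" "toggle \<in> Even \<rightarrow> Odd"
      using toggle_Pow odd_toggle unfolding Odd_def Even_def by auto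
  qed (simp_all add: toggle_toggle)
  then have "card Odd = card Even" by (rule bij_betw_same_card)
  moreover have "Odd \<union> Even = Pow V" "Odd \<inter> Even = {}"
    unfolding Odd_def Even_def by auto
  then have "card Odd + card Even = card (Pow V)"
    using assms(1) by (metis card_Un_disjoint finite_Pow_iff finite_Un)
  ultimately show ?thesis unfolding Odd_def by simp
qed

lemma prob_odd_card_Diff_random_subset:
  assumes "finite V" and "U \<subseteq> V" and "u \<in> U"
  shows "measure_pmf.prob (pmf_of_set (Pow V)) {X. odd (card (U - X))} = 1/2"
proof -
  have "Pow V \<inter> {X. odd (card (U - X))} = {X \<in> Pow V. odd (card (U - X))}" by blast
  with card_subsets_odd_card_Diff[OF assms]
  have "2 * real (card (Pow V \<inter> {X. odd (card (U - X))})) = card (Pow V)"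
    by (metis of_nat_mult of_nat_numeral)
  moreover have "Pow V \<noteq> {}" "finite (Pow V)" "card (Pow V) > 0"
    using assms(1) by (auto simp: card_gt_0_iff)
  ultimately show ?thesis by (simp add: measure_pmf_of_set field_simps)
qed

theorem mainTheorem9:
  fixes V :: "'a set" and E :: "'a \<Rightarrow> 'a \<Rightarrow> bool" and w :: "'a \<Rightarrow> 'a \<Rightarrow> int"
  assumes "finite V"
    and "\<And>u v. E u v \<Longrightarrow> u \<in> V \<and> v \<in> V"
    and "\<And>u v. E u v \<Longrightarrow> E v u"
    and "\<And>u. \<not> E u u"
    and "\<And>u v. w u v = w v u"
  shows "(\<not> has_neg_triangle V E w \<longrightarrow>
            measure_pmf.prob (pmf_of_set (Pow V)) {V1. even (N_G' V E w V1)} = 1)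
       \<and> (has_neg_triangle V E w \<longrightarrow>
            measure_pmf.prob (pmf_of_set (Pow V)) {V1. odd (N_G' V E w V1)} = 1/2)"
proof -
  define U where "U = {a \<in> V. \<exists>b c. neg_triangle V E w a b c}"
  have parity: "odd (N_G' V E w V1) \<longleftrightarrow> odd (card (U - V1))" if "V1 \<subseteq> V" for V1
    using N_G'_eq[of V E V1 w, OF assms(1-4) that] unfolding U_def by simp
  have Pow_V: "Pow V \<noteq> {}" "finite (Pow V)" using assms(1) by auto
  note prob = measure_pmf_of_set[OF Pow_V]
  show ?thesis
  proof (intro conjI impI)
    assume "\<not> has_neg_triangle V E w"
    then have "U = {}" unfolding U_def has_neg_triangle_def by blast
    then have "Pow V \<inter> {V1. even (N_G' V E w V1)} = Pow V"
      using parity by auto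
    then show "measure_pmf.prob (pmf_of_set (Pow V)) {V1. even (N_G' V E w V1)} = 1"
      using Pow_V by (simp add: prob card_gt_0_iff)
  next
    assume "has_neg_triangle V E w"
    then obtain a b c where "neg_triangle V E w a b c" unfolding has_neg_triangle_def by blast
    then have "a \<in> U" unfolding U_def neg_triangle_def by blast
    have "U \<subseteq> V" unfolding U_def by blast
    have "Pow V \<inter> {V1. odd (N_G' V E w V1)} = Pow V \<inter> {X. odd (card (U - X))}"
      using parity by auto
    then have "measure_pmf.prob (pmf_of_set (Pow V)) {V1. odd (N_G' V E w V1)}
        = measure_pmf.prob (pmf_of_set (Pow V)) {X. odd (card (U - X))}"
      by (simp only: prob)
    also have "\<dots> = 1/2"
      using assms(1) \<open>U \<subseteq> V\<close> \<open>a \<in> U\<close> by (rule prob_odd_card_Diff_random_subset)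
    finally show "measure_pmf.prob (pmf_of_set (Pow V)) {V1. odd (N_G' V E w V1)} = 1/2" .
  qed
qed

end
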